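(* Let $X_1,X_2,\dots$ be i.i.d. $\mathbb{Z}$-valued random variables on $(\Omega,\mathcal{F},P)$, $S_n=\sum_{j=1}^nX_j$, satisfying (A1) and (A3) below, with constants $\beta,c_*,\varepsilon$ from (A3). Then there exist $C_3>0$ and $N_3\in\mathbb{N}$ such that for all $n\ge N_3$, $$\left|n^{1/\beta}P\{S_n=0\}-\frac{1}{\beta c_*^{1/\beta}\pi}\Gamma\Big(\frac1\beta\Big)\right|\le C_3n^{-\delta},$$ where $\delta=\min\{\varepsilon/(2\beta),1/2\}$ and $\Gamma$ is the gamma function.
   Context: $\phi(\theta)=\sum_{k\in\mathbb{Z}}e^{i\theta k}P\{X_1=k\}$. (A1) For each $y\in\mathbb{Z}$, the smallest subgroup of $\mathbb{Z}$ containing $\{y+k:P\{X_1=k\}>0\}$ is $\mathbb{Z}$. (A3) There exist $\beta\in(0,2]$, $c_*>0$, $\varepsilon>0$ with $\phi(\theta)=1-c_*|\theta|^\beta+O(|\theta|^{\beta+\varepsilon})$ as $\theta\to0$. *)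

theory Defs
  imports "HOL-Probability.Probability" "HOL-Library.Landau_Symbols"
begin

definition charfn :: "'a measure \<Rightarrow> ('a \<Rightarrow> int) \<Rightarrow> real \<Rightarrow> complex" where
  "charfn M Y \<theta> = (\<Sum>\<^sub>\<infinity>k\<in>(UNIV::int set). cis (\<theta> * of_int k) * complex_of_real (measure M {\<omega>\<in>space M. Y \<omega> = k}))"

definition int_subgroup_gen :: "int set \<Rightarrow> int set" where
  "int_subgroup_gen A = \<Inter>{G. 0 \<in> G \<and> (\<forall>a\<in>G. \<forall>b\<in>G. a - b \<in> G) \<and> A \<subseteq> G}"

end

theory Submission
  imports Defs "HOL-Real_Asymp.Real_Asymp"
begin

text \<open>By Fourier inversion on the torus, \<open>2\<pi> P{S\<^sub>n = 0}\<close> is the integral of \<open>\<phi>\<^sup>n\<close> over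
  \<open>[-\<pi>, \<pi>]\<close>, and the stretched Gaussian \<open>exp (-n c\<^sub>* |\<theta>|\<^sup>\<beta>)\<close> integrates over \<open>\<real>\<close> to
  \<open>2 \<Gamma>(1/\<beta>) / (\<beta> (n c\<^sub>*)\<^bsup>1/\<beta>\<^esup>)\<close>. The two integrands are compared on \<open>|\<theta>| \<le> r\<^sub>n\<close> with
  \<open>r\<^sub>n = n\<^bsup>\<gamma> - 1/\<beta>\<^esup>\<close> for a small \<open>\<gamma> > 0\<close>, using \<open>|a\<^sup>n - b\<^sup>n| \<le> n |a - b|\<close> and (A3). Outside
  that window both are bounded by \<open>exp (-n \<kappa> |\<theta>|\<^sup>\<beta>)\<close>: near \<open>0\<close> this follows from (A3), and
  away from \<open>0\<close> from \<open>|\<phi>| < 1\<close> on \<open>0 < |\<theta>| \<le> \<pi>\<close>, which is where the aperiodicity (A1) enters: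
  \<open>|\<phi>(\<theta>)| = 1\<close> forces \<open>e\<^bsup>i\<theta>k\<^esup>\<close> to be constant on the support of \<open>X\<^sub>1\<close>, hence \<open>e\<^bsup>i\<theta>\<^esup> = 1\<close>.\<close>

lemma abs_exp_minus_sub_le_square:
  fixes x :: real
  assumes "x \<ge> 0"
  shows "\<bar>exp (-x) - (1 - x)\<bar> \<le> x\<^sup>2"
proof -
  have lower: "1 - x \<le> exp (-x)" using exp_ge_add_one_self[of "-x"] by simp
  have "exp (-x) \<le> 1 / (1 + x)"
    using exp_ge_add_one_self[of x] assms by (simp add: exp_minus field_simps)
  also have "\<dots> \<le> 1 - x + x\<^sup>2"
  proof -
    have "1 \<le> (1 + x) * (1 - x + x\<^sup>2)"
      using assms by (simp add: algebra_simps power2_eq_square power3_eq_cube)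
    thus ?thesis using assms by (simp add: field_simps)
  qed
  finally show ?thesis using lower by simp
qed

lemma norm_sub_exp_le_of_expansion:
  fixes z :: complex and c t \<beta> e B :: real
  assumes "c \<ge> 0" "0 \<le> t" "t \<le> 1" "e \<le> \<beta>"
    and "norm (z - (1 - complex_of_real (c * t powr \<beta>))) \<le> B * t powr (\<beta> + e)"
  shows "norm (z - exp (-(c * t powr \<beta>))) \<le> (B + c\<^sup>2) * t powr (\<beta> + e)"
proof -
  define x where "x = c * t powr \<beta>"
  have x: "x \<ge> 0" using assms(1) by (simp add: x_def)
  have "norm (z - exp (-x))
      \<le> norm (z - (1 - complex_of_real x)) + norm (complex_of_real ((1 - x) - exp (-x)))"
    using norm_triangle_ineq[of "z - (1 - complex_of_real x)" "complex_of_real ((1 - x) - exp (-x))"]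
    by (simp add: algebra_simps)
  also have "\<dots> \<le> B * t powr (\<beta> + e) + x\<^sup>2"
  proof (rule add_mono)
    show "norm (z - (1 - complex_of_real x)) \<le> B * t powr (\<beta> + e)"
      using assms(5) by (simp add: x_def)
    show "norm (complex_of_real ((1 - x) - exp (-x))) \<le> x\<^sup>2"
      unfolding norm_of_real using abs_exp_minus_sub_le_square[OF x] by (simp add: abs_minus_commute)
  qed
  also have "x\<^sup>2 = c\<^sup>2 * t powr (2 * \<beta>)"
    by (simp add: x_def power_mult_distrib power2_eq_square flip: powr_add)
  also have "\<dots> \<le> c\<^sup>2 * t powr (\<beta> + e)"
    using assms by (intro mult_left_mono powr_mono') auto
  finally show ?thesis by (simp add: x_def algebra_simps)
qed

lemma norm_le_of_expansion:
  fixes z :: complex and c t \<beta> e B :: real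
  assumes "t \<ge> 0" "c * t powr \<beta> \<le> 1" "B * t powr e \<le> c / 2"
    and "norm (z - (1 - complex_of_real (c * t powr \<beta>))) \<le> B * t powr (\<beta> + e)"
  shows "norm z \<le> 1 - c / 2 * t powr \<beta>"
proof -
  have "norm (1 - complex_of_real (c * t powr \<beta>)) = 1 - c * t powr \<beta>"
  proof -
    have "1 - complex_of_real (c * t powr \<beta>) = complex_of_real (1 - c * t powr \<beta>)" by simp
    thus ?thesis using assms(2) by (simp only: norm_of_real)
  qed
  moreover have "B * t powr (\<beta> + e) \<le> c / 2 * t powr \<beta>"
    using mult_right_mono[OF assms(3), of "t powr \<beta>"] by (simp add: powr_add mult_ac)
  moreover have "norm z \<le> norm (1 - complex_of_real (c * t powr \<beta>))
                  + norm (z - (1 - complex_of_real (c * t powr \<beta>)))"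
    by (rule norm_triangle_sub)
  ultimately show ?thesis using assms(4) by linarith
qed

lemma norm_power_sub_exp_le:
  fixes z :: complex and x D :: real
  assumes "norm z \<le> 1" "x \<ge> 0" "norm (z - exp (-x)) \<le> D"
  shows "norm (z ^ n - exp (-(real n * x))) \<le> real n * D"
proof -
  have "exp (-(real n * x)) = exp (-x) ^ n"
    by (simp add: exp_of_nat_mult[symmetric])
  hence "norm (z ^ n - exp (-(real n * x))) = norm (z ^ n - complex_of_real (exp (-x)) ^ n)"
    by simp
  also have "\<dots> \<le> real n * norm (z - complex_of_real (exp (-x)))"
    using assms(1,2) by (intro norm_power_diff) auto
  also have "\<dots> \<le> real n * D" using assms(3) by (intro mult_left_mono) auto
  finally show ?thesis .
qed

lemma eventually_exp_neg_powr_le_powr: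
  fixes a s p :: real
  assumes "a > 0" "s > 0"
  shows "eventually (\<lambda>n. exp (-(a * real n powr s)) \<le> real n powr (-p)) sequentially"
proof -
  have "((\<lambda>x::real. exp (-(a * x powr s)) * x powr p) \<longlongrightarrow> 0) at_top"
    using assms by real_asymp
  hence "eventually (\<lambda>x::real. exp (-(a * x powr s)) * x powr p < 1) at_top"
    by (rule order_tendstoD) simp
  hence "eventually (\<lambda>x::real. exp (-(a * x powr s)) \<le> x powr (-p)) at_top"
    using eventually_gt_at_top[of 0]
  proof eventually_elim
    case (elim x)
    hence "exp (-(a * x powr s)) * x powr p * x powr (-p) \<le> 1 * x powr (-p)"
      by (intro mult_right_mono) auto
    thus ?case using elim by (simp add: mult.assoc powr_add[symmetric])
  qed
  thus ?thesis by (rule eventually_compose_filterlim[OF _ filterlim_real_sequentially])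
qed

lemma eventually_powr_le:
  fixes q \<eta> :: real
  assumes "q < 0" "\<eta> > 0"
  shows "eventually (\<lambda>n. real n powr q \<le> \<eta>) sequentially"
proof -
  have "((\<lambda>x::real. x powr q) \<longlongrightarrow> 0) at_top" using assms by real_asymp
  hence "eventually (\<lambda>x::real. x powr q < \<eta>) at_top" using assms by (intro order_tendstoD) auto
  hence "eventually (\<lambda>x::real. x powr q \<le> \<eta>) at_top" by (auto elim: eventually_mono)
  thus ?thesis by (rule eventually_compose_filterlim[OF _ filterlim_real_sequentially])
qed

section \<open>Integrals of stretched exponentials\<close>

lemma Gamma_integral_real_pos:
  fixes x :: real
  assumes "x > 0"
  shows "(\<lambda>t. t powr (x - 1) / exp t) absolutely_integrable_on {0<..}"
    and "integral {0<..} (\<lambda>t. t powr (x - 1) / exp t) = Gamma x"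
proof -
  have "((\<lambda>t. if t \<in> {0<..} then t powr (x - 1) / exp t else 0) has_integral Gamma x) {0..}"
    by (rule has_integral_spike[of "{0}", rotated 2, OF Gamma_integral_real[OF assms]]) auto
  hence I: "((\<lambda>t. t powr (x - 1) / exp t) has_integral Gamma x) {0<..}"
    by (subst (asm) has_integral_restrict) auto
  show "(\<lambda>t. t powr (x - 1) / exp t) absolutely_integrable_on {0<..}"
    by (rule nonnegative_absolutely_integrable_1) (use I in auto)
  show "integral {0<..} (\<lambda>t. t powr (x - 1) / exp t) = Gamma x"
    using I by (rule integral_unique)
qed

lemma stretched_exp_integral_pos:
  fixes a \<beta> :: real
  assumes a: "a > 0" and b: "\<beta> > 0"
  shows "(\<lambda>u. exp (-(a * u powr \<beta>))) absolutely_integrable_on {0<..}"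
    and "integral {0<..} (\<lambda>u. exp (-(a * u powr \<beta>))) = Gamma (1/\<beta>) / (\<beta> * a powr (1/\<beta>))"
proof -
  text \<open>Substitute \<open>u = (t/a)\<^bsup>1/\<beta>\<^esup>\<close>, which turns the integral into \<open>C \<Gamma>(1/\<beta>)\<close>.\<close>
  define g where "g = (\<lambda>t::real. (t / a) powr (1/\<beta>))"
  define g' where "g' = (\<lambda>t::real. (1/\<beta>) * (t / a) powr (1/\<beta> - 1) / a)"
  define C where "C = 1 / (\<beta> * a powr (1/\<beta>))"
  have img: "g ` {0<..} = {0<..}"
  proof safe
    fix u :: real assume u: "0 < u"
    have "g (a * u powr \<beta>) = u" using u a b by (simp add: g_def powr_powr)
    moreover have "a * u powr \<beta> > 0" using u a by simp
    ultimately show "u \<in> g ` {0<..}" by force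
  qed (use a in \<open>simp add: g_def\<close>)
  have der: "(g has_field_derivative g' t) (at t within {0<..})" if "t \<in> {0<..}" for t
    using that a unfolding g_def g'_def by (auto intro!: derivative_eq_intros simp: field_simps)
  have inj: "inj_on g {0<..}"
  proof (rule inj_onI)
    fix x y :: real assume "x \<in> {0<..}" "y \<in> {0<..}" "g x = g y"
    hence "(g x) powr \<beta> = (g y) powr \<beta>" by simp
    thus "x = y" using \<open>x \<in> _\<close> \<open>y \<in> _\<close> a b by (simp add: g_def powr_powr)
  qed
  have integrand: "\<bar>g' t\<bar> * exp (-(a * g t powr \<beta>)) = C * (t powr (1/\<beta> - 1) / exp t)"
    if "t > 0" for t
  proof -
    have "a powr (1/\<beta>) = a powr (1/\<beta> - 1) * a" using a powr_add[of a "1/\<beta> - 1" 1] by simp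
    hence "g' t = C * t powr (1/\<beta> - 1)"
      using that a b by (simp add: g'_def C_def powr_divide field_simps)
    moreover have "exp (-(a * g t powr \<beta>)) = 1 / exp t"
      using that a b by (simp add: g_def powr_powr exp_minus field_simps)
    moreover have "C > 0" using a b by (simp add: C_def)
    ultimately show ?thesis by simp
  qed
  have Gamma_scaled: "(\<lambda>t. C * (t powr (1/\<beta> - 1) / exp t)) absolutely_integrable_on {0<..}"
    "integral {0<..} (\<lambda>t. C * (t powr (1/\<beta> - 1) / exp t)) = C * Gamma (1/\<beta>)"
    using Gamma_integral_real_pos[of "1/\<beta>"] b
    by (auto intro!: set_integrable_mult_right simp del: times_divide_eq_right)
  have "(\<lambda>t. \<bar>g' t\<bar> * exp (-(a * g t powr \<beta>))) absolutely_integrable_on {0<..} \<and>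
      integral {0<..} (\<lambda>t. \<bar>g' t\<bar> * exp (-(a * g t powr \<beta>))) = C * Gamma (1/\<beta>)"
    using Gamma_scaled
      set_integrable_cong[OF refl refl, of "{0<..}" "\<lambda>t. \<bar>g' t\<bar> * exp (-(a * g t powr \<beta>))"
        "\<lambda>t. C * (t powr (1/\<beta> - 1) / exp t)"]
      integral_cong[of "{0<..}" "\<lambda>t. \<bar>g' t\<bar> * exp (-(a * g t powr \<beta>))"
        "\<lambda>t. C * (t powr (1/\<beta> - 1) / exp t)"]
    by (auto simp: integrand)
  hence "(\<lambda>u. exp (-(a * u powr \<beta>))) absolutely_integrable_on g ` {0<..} \<and>
        integral (g ` {0<..}) (\<lambda>u. exp (-(a * u powr \<beta>))) = C * Gamma (1/\<beta>)"
    using has_absolute_integral_change_of_variables_1'[OF _ der inj] by auto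
  thus "(\<lambda>u. exp (-(a * u powr \<beta>))) absolutely_integrable_on {0<..}"
    "integral {0<..} (\<lambda>u. exp (-(a * u powr \<beta>))) = Gamma (1/\<beta>) / (\<beta> * a powr (1/\<beta>))"
    unfolding img C_def by simp_all
qed

lemma stretched_exp_lborel:
  fixes a \<beta> :: real
  assumes a: "a > 0" and b: "\<beta> > 0"
  shows "integrable lborel (\<lambda>u. exp (-(a * \<bar>u\<bar> powr \<beta>)))"
    and "(\<integral>u. exp (-(a * \<bar>u\<bar> powr \<beta>)) \<partial>lborel) = 2 * Gamma (1/\<beta>) / (\<beta> * a powr (1/\<beta>))"
proof -
  define f where "f = (\<lambda>u::real. exp (-(a * \<bar>u\<bar> powr \<beta>)))"
  define B where "B = Gamma (1/\<beta>) / (\<beta> * a powr (1/\<beta>))"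
  define P where "P = (\<lambda>u. indicator {0<..} u * f u)"
  have [measurable]: "f \<in> borel_measurable borel" unfolding f_def by measurable
  have [measurable]: "P \<in> borel_measurable borel" unfolding P_def by measurable
  note half = stretched_exp_integral_pos[OF a b]
  have "set_integrable lebesgue {0<..} f"
    using half(1) by (subst set_integrable_cong[OF refl refl, of _ _ "\<lambda>u. exp (-(a * u powr \<beta>))"])
      (auto simp: f_def)
  hence "integrable lebesgue P"
    by (simp add: set_integrable_def P_def mult.commute)
  hence P_int: "integrable lborel P"
    by (subst (asm) integrable_completion) auto
  have "(LINT u:{0<..}|lebesgue. f u) = integral {0<..} f"
    by (rule set_lebesgue_integral_eq_integral(2)) fact
  also have "integral {0<..} f = integral {0<..} (\<lambda>u. exp (-(a * u powr \<beta>)))"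
    by (rule integral_cong) (simp add: f_def)
  finally have "(\<integral>u. P u \<partial>lebesgue) = B"
    using half(2) by (simp add: set_lebesgue_integral_def P_def B_def mult.commute)
  hence P_integral: "(\<integral>u. P u \<partial>lborel) = B"
    by (subst (asm) integral_completion) auto
  have Q_int: "integrable lborel (\<lambda>u. P (- u))"
  proof -
    have "integrable (distr lborel borel uminus) P" using P_int by (simp add: lborel_distr_uminus)
    thus ?thesis by (subst (asm) integrable_distr_eq) auto
  qed
  have Q_integral: "(\<integral>u. P (- u) \<partial>lborel) = B"
    using integral_distr[of uminus lborel borel P] P_integral by (simp add: lborel_distr_uminus)
  have split: "AE u in lborel. f u = P u + P (- u)"
    using AE_lborel_singleton[of 0] by eventually_elim (auto simp: P_def f_def indicator_def)
  have "integrable lborel (\<lambda>u. P u + P (- u))" using P_int Q_int by simp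
  thus "integrable lborel (\<lambda>u. exp (-(a * \<bar>u\<bar> powr \<beta>)))"
    unfolding f_def[symmetric] by (rule integrable_cong_AE_imp[OF _ _ AE_symmetric[OF split]]) simp
  have "(\<integral>u. f u \<partial>lborel) = (\<integral>u. P u + P (- u) \<partial>lborel)"
    by (rule integral_cong_AE) (use split in auto)
  also have "\<dots> = 2 * B" using P_int Q_int P_integral Q_integral by simp
  finally show "(\<integral>u. exp (-(a * \<bar>u\<bar> powr \<beta>)) \<partial>lborel) = 2 * Gamma (1/\<beta>) / (\<beta> * a powr (1/\<beta>))"
    by (simp add: f_def B_def)
qed

section \<open>Fourier inversion on the integers\<close>

lemma has_vector_derivative_iexp_scaled:
  "((\<lambda>x. iexp (x * c)) has_vector_derivative (c *\<^sub>R (\<i> * iexp (x * c)))) (at x within S)"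
proof -
  have "((\<lambda>x. x * c) has_real_derivative c) (at x within S)"
    by (auto intro!: derivative_eq_intros)
  hence "((\<lambda>x. x * c) has_vector_derivative c) (at x within S)"
    by (simp add: has_real_derivative_iff_has_vector_derivative)
  from vector_diff_chain_within[OF this has_vector_derivative_iexp] show ?thesis
    by (simp add: o_def)
qed

lemma integral_iexp_int:
  fixes k :: int
  shows "(\<integral>\<theta>. indicator {-pi..pi} \<theta> *\<^sub>R iexp (\<theta> * real_of_int k) \<partial>lborel)
           = (if k = 0 then complex_of_real (2*pi) else 0)"
proof (cases "k = 0")
  case True
  have "(\<integral>\<theta>. indicator {-pi..pi} \<theta> *\<^sub>R iexp (\<theta> * real_of_int k) \<partial>lborel)
      = (\<integral>\<theta>. indicator {-pi..pi} \<theta> \<partial>lborel) *\<^sub>R (1::complex)"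
    using True by (simp add: integral_scaleR_left[symmetric])
  thus ?thesis using True by (simp add: scaleR_conv_of_real)
next
  case False
  define F where "F = (\<lambda>x. (-\<i> / of_int k) * iexp (x * real_of_int k))"
  have "(\<integral>\<theta>. indicator {-pi..pi} \<theta> *\<^sub>R iexp (\<theta> * real_of_int k) \<partial>lborel)
      = (CLBINT \<theta>=-pi..pi. iexp (\<theta> * real_of_int k))"
    by (simp add: interval_integral_Icc set_lebesgue_integral_def)
  also have "\<dots> = F pi - F (-pi)"
  proof (rule interval_integral_FTC_finite)
    show "continuous_on {min (- pi) pi..max (- pi) pi} (\<lambda>\<theta>. iexp (\<theta> * real_of_int k))"
      by (intro continuous_intros)
    fix x
    have "(F has_vector_derivative
           ((-\<i> / of_int k) * (real_of_int k *\<^sub>R (\<i> * iexp (x * real_of_int k)))))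
          (at x within {min (- pi) pi..max (- pi) pi})"
      unfolding F_def by (rule has_vector_derivative_mult_right[OF has_vector_derivative_iexp_scaled])
    thus "(F has_vector_derivative iexp (x * real_of_int k)) (at x within {min (- pi) pi..max (- pi) pi})"
      using False by (simp add: scaleR_conv_of_real field_simps)
  qed
  also have "F pi = F (-pi)"
    unfolding F_def cis_conv_exp[symmetric]
    by (simp add: cis.ctr mult.commute sin_times_pi_eq_0)
  finally show ?thesis using False by simp
qed

lemma (in prob_space) AE_eq_expectation_if_norm_eq_1:
  fixes g :: "'a \<Rightarrow> complex"
  assumes int: "integrable M g" and unit: "\<And>\<omega>. \<omega> \<in> space M \<Longrightarrow> norm (g \<omega>) = 1"
    and mean: "norm (expectation g) = 1"
  shows "AE \<omega> in M. g \<omega> = expectation g"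
proof -
  define w where "w = expectation g"
  have cw: "cnj w * w = 1"
    using complex_norm_square[of w] mean by (simp add: w_def mult.commute)
  text \<open>\<open>Re (cnj w g) \<le> 1\<close> pointwise, with mean \<open>|w|\<^sup>2 = 1\<close>; so \<open>cnj w g = 1\<close> almost surely.\<close>
  have deficit_int: "integrable M (\<lambda>\<omega>. 1 - Re (cnj w * g \<omega>))"
    using int by (intro Bochner_Integration.integrable_diff integrable_Re integrable_mult_right) auto
  have "(\<integral>\<omega>. 1 - Re (cnj w * g \<omega>) \<partial>M) = 1 - Re (cnj w * w)"
    using int by (simp add: Bochner_Integration.integral_diff integrable_Re integrable_mult_right
        prob_space w_def)
  hence "(\<integral>\<omega>. 1 - Re (cnj w * g \<omega>) \<partial>M) = 0" using cw by simp
  moreover have "AE \<omega> in M. 0 \<le> 1 - Re (cnj w * g \<omega>)"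
  proof (rule AE_I2)
    fix \<omega> assume "\<omega> \<in> space M"
    hence "Re (cnj w * g \<omega>) \<le> 1"
      using complex_Re_le_cmod[of "cnj w * g \<omega>"] unit mean by (simp add: norm_mult w_def)
    thus "0 \<le> 1 - Re (cnj w * g \<omega>)" by simp
  qed
  ultimately have "AE \<omega> in M. Re (cnj w * g \<omega>) = 1"
    using integral_nonneg_eq_0_iff_AE[OF deficit_int] by simp
  thus ?thesis
  proof (rule AE_mp, intro AE_I2 impI)
    fix \<omega> assume \<omega>: "\<omega> \<in> space M" and re: "Re (cnj w * g \<omega>) = 1"
    have "norm (cnj w * g \<omega>) = 1" using unit[OF \<omega>] mean by (simp add: norm_mult w_def)
    hence "(Im (cnj w * g \<omega>))\<^sup>2 = 0" using re cmod_power2[of "cnj w * g \<omega>"] by simp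
    hence "cnj w * g \<omega> = 1" using re by (simp add: complex_eq_iff)
    hence "w * (cnj w * g \<omega>) = w" by simp
    moreover have "w * (cnj w * g \<omega>) = (cnj w * w) * g \<omega>" by (simp only: ac_simps)
    ultimately have "g \<omega> = w" using cw by simp
    thus "g \<omega> = expectation g" unfolding w_def .
  qed
qed

lemma int_subgroup_gen_least:
  assumes "0 \<in> H" "\<And>a b. a \<in> H \<Longrightarrow> b \<in> H \<Longrightarrow> a - b \<in> H" "A \<subseteq> H"
  shows "int_subgroup_gen A \<subseteq> H"
  unfolding int_subgroup_gen_def using assms by (intro Inter_lower) blast

lemma measurable_int_add:
  fixes f g :: "'a \<Rightarrow> int"
  assumes [measurable]: "f \<in> measurable M (count_space UNIV)" "g \<in> measurable M (count_space UNIV)"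
  shows "(\<lambda>\<omega>. f \<omega> + g \<omega>) \<in> measurable M (count_space UNIV)"
proof -
  have "(\<lambda>\<omega>. (f \<omega>, g \<omega>)) \<in> measurable M (count_space UNIV \<Otimes>\<^sub>M count_space UNIV)"
    by measurable
  hence "(\<lambda>\<omega>. (f \<omega>, g \<omega>)) \<in> measurable M (count_space UNIV)"
    by (simp add: pair_measure_countable)
  from measurable_comp[OF this, of "\<lambda>(a, b). a + b"] show ?thesis
    by (simp add: o_def)
qed

locale iid_int_walk = prob_space M for M :: "'a measure" +
  fixes X :: "nat \<Rightarrow> 'a \<Rightarrow> int"
  assumes measurable_X [measurable]: "\<And>i. X i \<in> measurable M (count_space UNIV)"
    and indep_X: "indep_vars (\<lambda>_. count_space UNIV) X UNIV"
    and distr_X: "\<And>i. distr M (count_space UNIV) (X i) = distr M (count_space UNIV) (X 0)"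
begin

definition S :: "nat \<Rightarrow> 'a \<Rightarrow> int" where
  "S n \<omega> = (\<Sum>j<n. X j \<omega>)"

definition phi :: "real \<Rightarrow> complex" where
  "phi \<theta> = (\<integral>\<omega>. iexp (\<theta> * real_of_int (X 0 \<omega>)) \<partial>M)"

definition pX :: "int \<Rightarrow> real" where
  "pX k = measure M {\<omega>\<in>space M. X 0 \<omega> = k}"

lemma measurable_S [measurable]: "S n \<in> measurable M (count_space UNIV)"
proof (induction n)
  case (Suc n)
  have "S (Suc n) = (\<lambda>\<omega>. S n \<omega> + X n \<omega>)" by (auto simp: S_def)
  thus ?case using measurable_int_add[OF Suc measurable_X] by simp
qed (simp add: S_def)

lemma integrable_iexp_int:
  assumes [measurable]: "f \<in> measurable M (count_space UNIV)"
  shows "integrable M (\<lambda>\<omega>. iexp (t * real_of_int (f \<omega>)))"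
  by (rule integrable_const_bound[where B=1]) (auto simp: norm_exp_i_times)

lemma integral_iexp_X: "(\<integral>\<omega>. iexp (\<theta> * real_of_int (X j \<omega>)) \<partial>M) = phi \<theta>"
proof -
  have "(\<integral>\<omega>. iexp (\<theta> * real_of_int (X j \<omega>)) \<partial>M)
      = (\<integral>k. iexp (\<theta> * real_of_int k) \<partial>distr M (count_space UNIV) (X j))"
    by (rule integral_distr[symmetric]) simp_all
  also have "\<dots> = (\<integral>k. iexp (\<theta> * real_of_int k) \<partial>distr M (count_space UNIV) (X 0))"
    by (rule arg_cong[OF distr_X])
  also have "\<dots> = phi \<theta>"
    unfolding phi_def by (rule integral_distr) simp_all
  finally show ?thesis .
qed

lemma integral_iexp_S: "(\<integral>\<omega>. iexp (\<theta> * real_of_int (S n \<omega>)) \<partial>M) = phi \<theta> ^ n"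
proof -
  have prod: "iexp (\<theta> * real_of_int (S n \<omega>)) = (\<Prod>j<n. iexp (\<theta> * real_of_int (X j \<omega>)))" for \<omega>
    by (simp add: S_def sum_distrib_left exp_sum[symmetric])
  have "indep_vars (\<lambda>_. borel) (\<lambda>j \<omega>. iexp (\<theta> * real_of_int (X j \<omega>))) {..<n}"
    by (rule indep_vars_compose2[where Y="\<lambda>j k. iexp (\<theta> * real_of_int k)",
          OF indep_vars_subset[OF indep_X]]) simp_all
  hence "(\<integral>\<omega>. (\<Prod>j<n. iexp (\<theta> * real_of_int (X j \<omega>))) \<partial>M)
       = (\<Prod>j<n. \<integral>\<omega>. iexp (\<theta> * real_of_int (X j \<omega>)) \<partial>M)"
    by (rule indep_vars_lebesgue_integral[rotated]) (use integrable_iexp_int[OF measurable_X] in auto)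
  thus ?thesis by (simp only: prod integral_iexp_X prod_constant card_lessThan)
qed

lemma prob_S_eq_0_Fourier:
  "complex_of_real (2*pi * prob {\<omega>\<in>space M. S n \<omega> = 0})
     = (\<integral>\<theta>. indicator {-pi..pi} \<theta> *\<^sub>R phi \<theta> ^ n \<partial>lborel)"
proof -
  interpret P: pair_sigma_finite lborel M ..
  define f where "f = (\<lambda>\<theta> \<omega>. indicator {-pi..pi} \<theta> *\<^sub>R iexp (\<theta> * real_of_int (S n \<omega>)))"
  have f_meas [measurable]: "case_prod f \<in> borel_measurable (lborel \<Otimes>\<^sub>M M)"
    unfolding f_def by measurable
  have f_int: "integrable (lborel \<Otimes>\<^sub>M M) (case_prod f)"
  proof (rule P.Fubini_integrable[OF f_meas])
    have "(\<integral>\<omega>. norm (f \<theta> \<omega>) \<partial>M) = indicator {-pi..pi} \<theta>" for \<theta>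
      by (simp add: f_def norm_exp_i_times prob_space)
    thus "integrable lborel (\<lambda>x. \<integral>y. norm (case_prod f (x, y)) \<partial>M)"
      by simp
    show "AE x in lborel. integrable M (\<lambda>y. case_prod f (x, y))"
      unfolding f_def prod.case by (intro AE_I2 integrable_scaleR_right integrable_iexp_int) simp
  qed
  have "(\<integral>\<theta>. indicator {-pi..pi} \<theta> *\<^sub>R phi \<theta> ^ n \<partial>lborel) = (\<integral>\<theta>. (\<integral>\<omega>. f \<theta> \<omega> \<partial>M) \<partial>lborel)"
    by (simp add: f_def integral_iexp_S[symmetric])
  also have "\<dots> = (\<integral>\<omega>. (\<integral>\<theta>. f \<theta> \<omega> \<partial>lborel) \<partial>M)"
    using P.Fubini_integral[OF f_int] by simp
  also have "\<dots> = (\<integral>\<omega>. complex_of_real (2*pi * indicator {\<omega>\<in>space M. S n \<omega> = 0} \<omega>) \<partial>M)"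
  proof (rule Bochner_Integration.integral_cong)
    fix \<omega> assume "\<omega> \<in> space M"
    thus "(\<integral>\<theta>. f \<theta> \<omega> \<partial>lborel) = complex_of_real (2*pi * indicator {\<omega>\<in>space M. S n \<omega> = 0} \<omega>)"
      unfolding f_def integral_iexp_int by (simp add: indicator_def)
  qed simp
  also have "\<dots> = complex_of_real (2*pi * prob {\<omega>\<in>space M. S n \<omega> = 0})"
    by simp
  finally show ?thesis ..
qed

lemma distr_X0_eq_density: "distr M (count_space UNIV) (X 0) = density (count_space UNIV) (\<lambda>k. ennreal (pX k))"
proof (rule measure_eqI)
  define D where "D = distr M (count_space UNIV) (X 0)"
  interpret D: prob_space D unfolding D_def by (rule prob_space_distr) simp
  fix A :: "int set"
  have pX_D: "pX k = measure D {k}" for k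
    unfolding pX_def D_def by (subst measure_distr) (auto intro!: arg_cong[where f="measure M"])
  have "(\<integral>\<^sup>+ x. ennreal (pX x) * indicator A x \<partial>count_space UNIV) =
      (\<integral>\<^sup>+ x. emeasure D {x} * indicator A x \<partial>count_space UNIV)"
    by (auto intro!: nn_integral_cong simp: pX_D D.emeasure_eq_measure)
  also have "\<dots> = (\<integral>\<^sup>+ x. emeasure D {x} \<partial>count_space A)"
    by (subst nn_integral_restrict_space[symmetric])
       (auto simp: restrict_count_space nn_integral_count_space_indicator)
  also have "\<dots> = emeasure D (\<Union>x\<in>A. {x})"
    by (intro emeasure_UN_countable[symmetric]) (auto simp: disjoint_family_on_def D_def)
  finally show "emeasure (distr M (count_space UNIV) (X 0)) A
      = emeasure (density (count_space UNIV) (\<lambda>k. ennreal (pX k))) A"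
    by (simp add: emeasure_density D_def)
qed simp

lemma charfn_eq_phi: "charfn M (X 0) \<theta> = phi \<theta>"
proof -
  let ?D = "distr M (count_space UNIV) (X 0)"
  let ?f = "\<lambda>k. pX k *\<^sub>R iexp (\<theta> * real_of_int k)"
  interpret D: prob_space ?D by (rule prob_space_distr) simp
  have "integrable ?D (\<lambda>k. iexp (\<theta> * real_of_int k))"
    by (rule D.integrable_const_bound[where B=1]) (auto simp: norm_exp_i_times)
  hence "integrable (count_space UNIV) ?f"
    unfolding distr_X0_eq_density by (subst (asm) integrable_density) (auto simp: pX_def)
  hence summable: "Infinite_Set_Sum.abs_summable_on ?f UNIV"
    by (simp add: abs_summable_on_def)
  have "phi \<theta> = (\<integral>k. iexp (\<theta> * real_of_int k) \<partial>?D)"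
    unfolding phi_def by (rule integral_distr[symmetric]) simp_all
  also have "\<dots> = (\<integral>k. ?f k \<partial>count_space UNIV)"
    unfolding distr_X0_eq_density by (rule integral_density) (auto simp: pX_def)
  also have "\<dots> = infsetsum ?f UNIV"
    by (simp add: infsetsum_def)
  also have "\<dots> = infsum ?f UNIV"
    using summable by (rule infsetsum_infsum)
  also have "\<dots> = charfn M (X 0) \<theta>"
    unfolding charfn_def pX_def
    by (rule infsum_cong) (simp add: cis_conv_exp scaleR_conv_of_real mult.commute)
  finally show ?thesis ..
qed

lemma norm_phi_le_1: "norm (phi \<theta>) \<le> 1"
proof -
  have "norm (phi \<theta>) \<le> (\<integral>\<omega>. norm (iexp (\<theta> * real_of_int (X 0 \<omega>))) \<partial>M)"
    unfolding phi_def by (rule integral_norm_bound)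
  thus ?thesis by (simp add: norm_exp_i_times prob_space)
qed

lemma phi_0 [simp]: "phi 0 = 1"
  by (simp add: phi_def prob_space)

lemma isCont_phi: "isCont phi t"
  unfolding continuous_at_sequentially
proof safe
  fix Y assume "Y \<longlonglongrightarrow> t"
  thus "(phi \<circ> Y) \<longlonglongrightarrow> phi t"
    unfolding comp_def phi_def
    by (intro integral_dominated_convergence[where w="\<lambda>_. 1"])
       (auto simp: norm_exp_i_times intro!: tendsto_intros)
qed

lemma borel_measurable_phi [measurable]: "phi \<in> borel_measurable borel"
  by (auto intro!: borel_measurable_continuous_onI continuous_at_imp_continuous_on isCont_phi)

lemma AE_X0_imp_support:
  assumes "AE \<omega> in M. P (X 0 \<omega>)" "pX k > 0"
  shows "P k"
proof (rule ccontr)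
  assume "\<not> P k"
  from assms(1) obtain N where N: "{\<omega>\<in>space M. \<not> P (X 0 \<omega>)} \<subseteq> N" "emeasure M N = 0" "N \<in> sets M"
    by (rule AE_E)
  have "pX k \<le> measure M N"
    unfolding pX_def using N(1,3) \<open>\<not> P k\<close> by (intro finite_measure_mono) auto
  thus False using N(2) assms(2) by (simp add: measure_def)
qed

end

locale aperiodic_int_walk = iid_int_walk +
  assumes aperiodic: "\<And>y::int. int_subgroup_gen {y + k | k. pX k > 0} = UNIV"
begin

lemma norm_phi_less_1:
  assumes "\<theta> \<noteq> 0" "\<bar>\<theta>\<bar> \<le> pi"
  shows "norm (phi \<theta>) < 1"
proof (rule ccontr)
  assume "\<not> norm (phi \<theta>) < 1"
  hence "norm (phi \<theta>) = 1" using norm_phi_le_1[of \<theta>] by simp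
  hence "AE \<omega> in M. iexp (\<theta> * real_of_int (X 0 \<omega>)) = phi \<theta>"
    unfolding phi_def
    by (intro AE_eq_expectation_if_norm_eq_1 integrable_iexp_int) (simp_all add: norm_exp_i_times)
  hence on_support: "pX k > 0 \<Longrightarrow> iexp (\<theta> * real_of_int k) = phi \<theta>" for k
    by (rule AE_X0_imp_support)
  have "\<exists>k0. pX k0 > 0"
  proof (rule ccontr)
    assume "\<nexists>k0. pX k0 > 0"
    hence "int_subgroup_gen {0 + k | k. pX k > 0} \<subseteq> {0}"
      by (intro int_subgroup_gen_least) auto
    thus False using aperiodic[of 0] by (metis UNIV_I singletonD subsetD zero_neq_one)
  qed
  then obtain k0 where k0: "pX k0 > 0" ..
  text \<open>The kernel of \<open>k \<mapsto> e\<^bsup>i\<theta>k\<^esup>\<close> is a subgroup containing the support of \<open>X\<^sub>0\<close> shifted by \<open>-k\<^sub>0\<close>.\<close>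
  define H where "H = {m::int. iexp (\<theta> * real_of_int m) = 1}"
  have iexp_diff: "iexp (\<theta> * real_of_int (a - b)) = iexp (\<theta> * real_of_int a) / iexp (\<theta> * real_of_int b)"
    for a b
    unfolding cis_conv_exp[symmetric] by (simp only: cis_divide of_int_diff right_diff_distrib)
  have "int_subgroup_gen {- k0 + k | k. pX k > 0} \<subseteq> H"
  proof (rule int_subgroup_gen_least)
    show "a - b \<in> H" if "a \<in> H" "b \<in> H" for a b
      using that iexp_diff[of a b] by (simp add: H_def)
    show "{- k0 + k | k. pX k > 0} \<subseteq> H"
    proof safe
      fix k assume "pX k > 0"
      hence "iexp (\<theta> * real_of_int k) = phi \<theta>" "iexp (\<theta> * real_of_int k0) = phi \<theta>"
        using on_support k0 by auto
      moreover have "phi \<theta> \<noteq> 0" using \<open>norm (phi \<theta>) = 1\<close> by auto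
      ultimately show "- k0 + k \<in> H" using iexp_diff[of k k0] by (simp add: H_def)
    qed
  qed (simp add: H_def)
  hence "1 \<in> H" using aperiodic[of "-k0"] by auto
  hence "cis \<theta> = 1" by (simp add: H_def cis_conv_exp)
  hence "cos \<bar>\<theta>\<bar> = cos 0" by (simp add: complex_eq_iff)
  hence "\<bar>\<theta>\<bar> = 0" using cos_inj_pi[of "\<bar>\<theta>\<bar>" 0] assms by simp
  thus False using assms by simp
qed

end

section \<open>Bounds on the characteristic function\<close>

context iid_int_walk
begin

lemma phi_expansion_near_0:
  fixes \<beta> c \<epsilon> e :: real
  assumes "\<beta> > 0" "0 < e" "e \<le> \<epsilon>"
    and "(\<lambda>\<theta>. phi \<theta> - (1 - complex_of_real (c * \<bar>\<theta>\<bar> powr \<beta>)))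
           \<in> O[at 0](\<lambda>\<theta>. complex_of_real (\<bar>\<theta>\<bar> powr (\<beta> + \<epsilon>)))"
  shows "\<exists>\<eta>>0. \<exists>B\<ge>0. \<forall>\<theta>. \<bar>\<theta>\<bar> < \<eta> \<longrightarrow>
           norm (phi \<theta> - (1 - complex_of_real (c * \<bar>\<theta>\<bar> powr \<beta>))) \<le> B * \<bar>\<theta>\<bar> powr (\<beta> + e)"
proof -
  obtain K where K: "K > 0" "eventually (\<lambda>\<theta>. norm (phi \<theta> - (1 - complex_of_real (c * \<bar>\<theta>\<bar> powr \<beta>)))
       \<le> K * norm (complex_of_real (\<bar>\<theta>\<bar> powr (\<beta> + \<epsilon>)))) (at 0)"
    using landau_o.bigE[OF assms(4)] by blast
  then obtain d where d: "d > 0" "\<And>\<theta>. \<theta> \<noteq> 0 \<Longrightarrow> \<bar>\<theta>\<bar> < d \<Longrightarrow>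
      norm (phi \<theta> - (1 - complex_of_real (c * \<bar>\<theta>\<bar> powr \<beta>))) \<le> K * \<bar>\<theta>\<bar> powr (\<beta> + \<epsilon>)"
    unfolding eventually_at by auto
  have "norm (phi \<theta> - (1 - complex_of_real (c * \<bar>\<theta>\<bar> powr \<beta>))) \<le> K * \<bar>\<theta>\<bar> powr (\<beta> + e)"
    if "\<bar>\<theta>\<bar> < min d 1" for \<theta>
  proof (cases "\<theta> = 0")
    case False
    hence "norm (phi \<theta> - (1 - complex_of_real (c * \<bar>\<theta>\<bar> powr \<beta>))) \<le> K * \<bar>\<theta>\<bar> powr (\<beta> + \<epsilon>)"
      using d(2) that by simp
    also have "\<dots> \<le> K * \<bar>\<theta>\<bar> powr (\<beta> + e)"
      using K(1) that assms by (intro mult_left_mono powr_mono') auto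
    finally show ?thesis .
  qed (use assms K in simp)
  thus ?thesis using d(1) K(1) by (intro exI[of _ "min d 1"] conjI exI[of _ K]) auto
qed

lemma phi_near_stretched_exp:
  fixes \<beta> c e \<eta>\<^sub>0 B :: real
  assumes "c > 0" "e \<le> \<beta>" "\<eta>\<^sub>0 > 0"
    and "\<And>\<theta>. \<bar>\<theta>\<bar> < \<eta>\<^sub>0 \<Longrightarrow>
           norm (phi \<theta> - (1 - complex_of_real (c * \<bar>\<theta>\<bar> powr \<beta>))) \<le> B * \<bar>\<theta>\<bar> powr (\<beta> + e)"
  shows "\<exists>\<eta> B'. 0 < \<eta> \<and> \<eta> \<le> 1 \<and> 0 \<le> B' \<and>
           (\<forall>\<theta>. \<bar>\<theta>\<bar> \<le> \<eta> \<longrightarrow> norm (phi \<theta> - exp (-(c * \<bar>\<theta>\<bar> powr \<beta>))) \<le> B' * \<bar>\<theta>\<bar> powr (\<beta> + e))"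
proof (intro exI conjI allI impI)
  fix \<theta> :: real assume "\<bar>\<theta>\<bar> \<le> min (\<eta>\<^sub>0/2) 1"
  thus "norm (phi \<theta> - exp (-(c * \<bar>\<theta>\<bar> powr \<beta>))) \<le> (\<bar>B\<bar> + c\<^sup>2) * \<bar>\<theta>\<bar> powr (\<beta> + e)"
    using assms by (intro norm_sub_exp_le_of_expansion order.trans[OF assms(4)] mult_right_mono) auto
qed (use assms in auto)

end

context aperiodic_int_walk
begin

lemma norm_phi_le_away_from_0:
  assumes "\<eta> > 0"
  shows "\<exists>\<rho><1. \<forall>\<theta>. \<eta> \<le> \<bar>\<theta>\<bar> \<and> \<bar>\<theta>\<bar> \<le> pi \<longrightarrow> norm (phi \<theta>) \<le> \<rho>"
proof -
  define K where "K = {-pi..-\<eta>} \<union> {\<eta>..pi}"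
  have K_iff: "\<theta> \<in> K \<longleftrightarrow> \<eta> \<le> \<bar>\<theta>\<bar> \<and> \<bar>\<theta>\<bar> \<le> pi" for \<theta>
    using assms by (auto simp: K_def abs_if)
  show ?thesis
  proof (cases "K = {}")
    case True thus ?thesis using K_iff by (intro exI[of _ 0]) auto
  next
    case False
    have "compact K" unfolding K_def by (intro compact_Un compact_Icc)
    moreover have "continuous_on K (\<lambda>\<theta>. norm (phi \<theta>))"
      by (intro continuous_at_imp_continuous_on ballI continuous_intros isCont_phi)
    ultimately obtain x where x: "x \<in> K" "\<forall>y\<in>K. norm (phi y) \<le> norm (phi x)"
      using continuous_attains_sup[of K "\<lambda>\<theta>. norm (phi \<theta>)"] False by blast
    have "norm (phi x) < 1" using x(1) K_iff[of x] assms by (intro norm_phi_less_1) auto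
    thus ?thesis using x(2) K_iff by blast
  qed
qed

lemma norm_phi_le_1_minus_powr:
  fixes \<beta> c e \<eta>\<^sub>0 B :: real
  assumes "\<beta> > 0" "c > 0" "e > 0" "\<eta>\<^sub>0 > 0" "B \<ge> 0"
    and expansion: "\<And>\<theta>. \<bar>\<theta>\<bar> < \<eta>\<^sub>0 \<Longrightarrow>
           norm (phi \<theta> - (1 - complex_of_real (c * \<bar>\<theta>\<bar> powr \<beta>))) \<le> B * \<bar>\<theta>\<bar> powr (\<beta> + e)"
  shows "\<exists>\<kappa>>0. \<kappa> \<le> c \<and> (\<forall>\<theta>. \<bar>\<theta>\<bar> \<le> pi \<longrightarrow> norm (phi \<theta>) \<le> 1 - \<kappa> * \<bar>\<theta>\<bar> powr \<beta>)"
proof -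
  text \<open>On \<open>|\<theta>| \<le> \<eta>\<^sub>1\<close> the expansion gives slope \<open>c/2\<close>; beyond, \<open>|\<phi>| \<le> \<rho> < 1\<close> by compactness.\<close>
  define \<eta>\<^sub>1 where "\<eta>\<^sub>1 = min (\<eta>\<^sub>0/2) (min ((1/c) powr (1/\<beta>)) ((c/(2*(B+1))) powr (1/e)))"
  have "\<eta>\<^sub>1 > 0" using assms by (simp add: \<eta>\<^sub>1_def)
  have near: "norm (phi \<theta>) \<le> 1 - c/2 * \<bar>\<theta>\<bar> powr \<beta>" if "\<bar>\<theta>\<bar> \<le> \<eta>\<^sub>1" for \<theta>
  proof (rule norm_le_of_expansion)
    have "\<bar>\<theta>\<bar> powr \<beta> \<le> ((1/c) powr (1/\<beta>)) powr \<beta>"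
      using that assms by (intro powr_mono2) (auto simp: \<eta>\<^sub>1_def)
    thus "c * \<bar>\<theta>\<bar> powr \<beta> \<le> 1" using assms by (simp add: powr_powr field_simps)
    have "\<bar>\<theta>\<bar> powr e \<le> ((c/(2*(B+1))) powr (1/e)) powr e"
      using that assms by (intro powr_mono2) (auto simp: \<eta>\<^sub>1_def)
    hence "\<bar>\<theta>\<bar> powr e \<le> c/(2*(B+1))" using assms by (simp add: powr_powr)
    hence "B * \<bar>\<theta>\<bar> powr e \<le> B * (c/(2*(B+1)))" using assms by (intro mult_left_mono) auto
    also have "\<dots> \<le> c/2" using assms by (simp add: field_simps)
    finally show "B * \<bar>\<theta>\<bar> powr e \<le> c/2" .
    show "norm (phi \<theta> - (1 - complex_of_real (c * \<bar>\<theta>\<bar> powr \<beta>))) \<le> B * \<bar>\<theta>\<bar> powr (\<beta> + e)"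
      using that assms by (intro expansion) (simp add: \<eta>\<^sub>1_def)
  qed simp
  obtain \<rho> where \<rho>: "\<rho> < 1" "\<And>\<theta>. \<eta>\<^sub>1 \<le> \<bar>\<theta>\<bar> \<Longrightarrow> \<bar>\<theta>\<bar> \<le> pi \<Longrightarrow> norm (phi \<theta>) \<le> \<rho>"
    using norm_phi_le_away_from_0[OF \<open>\<eta>\<^sub>1 > 0\<close>] by blast
  define \<kappa> where "\<kappa> = min (c/2) ((1 - \<rho>) / pi powr \<beta>)"
  have "\<kappa> > 0" using assms \<rho>(1) by (simp add: \<kappa>_def)
  have "\<kappa> \<le> c/2" unfolding \<kappa>_def by (rule min.cobounded1)
  have "norm (phi \<theta>) \<le> 1 - \<kappa> * \<bar>\<theta>\<bar> powr \<beta>" if "\<bar>\<theta>\<bar> \<le> pi" for \<theta>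
  proof (cases "\<bar>\<theta>\<bar> \<le> \<eta>\<^sub>1")
    case True
    have "\<kappa> * \<bar>\<theta>\<bar> powr \<beta> \<le> c/2 * \<bar>\<theta>\<bar> powr \<beta>" using \<open>\<kappa> \<le> c/2\<close> by (intro mult_right_mono) auto
    thus ?thesis using near[OF True] by simp
  next
    case False
    have "\<kappa> * \<bar>\<theta>\<bar> powr \<beta> \<le> ((1 - \<rho>) / pi powr \<beta>) * pi powr \<beta>"
      using that assms \<open>\<kappa> > 0\<close> by (intro mult_mono powr_mono2) (auto simp: \<kappa>_def)
    thus ?thesis using \<rho>(2)[of \<theta>] False that by simp
  qed
  thus ?thesis using \<open>\<kappa> > 0\<close> \<open>\<kappa> \<le> c/2\<close> by (intro exI[of _ \<kappa>]) auto
qed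

end

section \<open>Comparison with the stretched Gaussian\<close>

lemma integrable_indicator_power:
  fixes \<phi> :: "real \<Rightarrow> complex"
  assumes [measurable]: "\<phi> \<in> borel_measurable borel"
    and "\<And>\<theta>. \<bar>\<theta>\<bar> \<le> pi \<Longrightarrow> norm (\<phi> \<theta>) \<le> 1"
  shows "integrable lborel (\<lambda>\<theta>. indicator {-pi..pi} \<theta> *\<^sub>R \<phi> \<theta> ^ n)"
proof (rule Bochner_Integration.integrable_bound[where f="indicator {-pi..pi} :: real \<Rightarrow> real"])
  show "AE \<theta> in lborel. norm (indicator {-pi..pi} \<theta> *\<^sub>R \<phi> \<theta> ^ n) \<le> norm (indicator {-pi..pi} \<theta> :: real)"
  proof (rule AE_I2)
    fix \<theta> :: real
    have "norm (\<phi> \<theta> ^ n) \<le> 1" if "\<bar>\<theta>\<bar> \<le> pi"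
      using assms(2)[OF that] by (simp add: norm_power power_le_one)
    thus "norm (indicator {-pi..pi} \<theta> *\<^sub>R \<phi> \<theta> ^ n) \<le> norm (indicator {-pi..pi} \<theta> :: real)"
      by (auto simp: indicator_def abs_le_iff)
  qed
qed simp_all

lemma norm_power_sub_stretched_exp_tail:
  fixes \<phi> :: "real \<Rightarrow> complex" and \<beta> c \<kappa> r \<theta> :: real
  assumes "\<beta> > 0" "0 < \<kappa>" "\<kappa> \<le> c" "0 \<le> r" "r \<le> \<bar>\<theta>\<bar>"
    and bound: "\<bar>\<theta>\<bar> \<le> pi \<Longrightarrow> norm (\<phi> \<theta>) \<le> 1 - \<kappa> * \<bar>\<theta>\<bar> powr \<beta>"
  shows "norm (indicator {-pi..pi} \<theta> *\<^sub>R \<phi> \<theta> ^ n - complex_of_real (exp (-(real n * c * \<bar>\<theta>\<bar> powr \<beta>))))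
         \<le> 2 * exp (-(real n * \<kappa> / 2 * r powr \<beta>)) * exp (-(real n * \<kappa> / 2 * \<bar>\<theta>\<bar> powr \<beta>))"
proof -
  define x where "x = \<bar>\<theta>\<bar> powr \<beta>"
  have "x \<ge> 0" by (simp add: x_def)
  have "norm (indicator {-pi..pi} \<theta> *\<^sub>R \<phi> \<theta> ^ n) \<le> exp (-(real n * \<kappa> * x))"
  proof (cases "\<bar>\<theta>\<bar> \<le> pi")
    case True
    have "norm (\<phi> \<theta>) \<le> exp (-(\<kappa> * x))"
      using bound[OF True] exp_ge_add_one_self[of "-(\<kappa> * x)"] by (simp add: x_def)
    hence "norm (\<phi> \<theta>) ^ n \<le> exp (-(\<kappa> * x)) ^ n" by (intro power_mono) auto
    thus ?thesis using True by (simp add: norm_power abs_le_iff exp_of_nat_mult[symmetric] mult_ac)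
  qed (auto simp: indicator_def abs_le_iff)
  moreover have "norm (complex_of_real (exp (-(real n * c * x)))) \<le> exp (-(real n * \<kappa> * x))"
    using assms(3) \<open>x \<ge> 0\<close> by (simp add: mult_left_mono mult_right_mono)
  ultimately have "norm (indicator {-pi..pi} \<theta> *\<^sub>R \<phi> \<theta> ^ n - complex_of_real (exp (-(real n * c * x))))
      \<le> 2 * exp (-(real n * \<kappa> * x))"
    using norm_triangle_ineq4 by (smt (verit))
  also have "\<dots> = 2 * exp (-(real n * \<kappa> / 2 * x)) * exp (-(real n * \<kappa> / 2 * x))"
    by (simp add: exp_add[symmetric])
  also have "\<dots> \<le> 2 * exp (-(real n * \<kappa> / 2 * r powr \<beta>)) * exp (-(real n * \<kappa> / 2 * x))"
    using assms by (auto simp: x_def intro!: mult_left_mono powr_mono2)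
  finally show ?thesis by (simp add: x_def)
qed

lemma integral_power_sub_stretched_exp_le:
  fixes \<phi> :: "real \<Rightarrow> complex" and \<beta> c e \<kappa> \<eta> B r :: real and n :: nat
  assumes "\<beta> > 0" "c > 0" "e > 0" "\<kappa> > 0" "\<kappa> \<le> c" "\<eta> \<le> 1" "B \<ge> 0" "n \<ge> 1" "0 < r" "r \<le> \<eta>"
    and [measurable]: "\<phi> \<in> borel_measurable borel"
    and global: "\<And>\<theta>. \<bar>\<theta>\<bar> \<le> pi \<Longrightarrow> norm (\<phi> \<theta>) \<le> 1 - \<kappa> * \<bar>\<theta>\<bar> powr \<beta>"
    and local: "\<And>\<theta>. \<bar>\<theta>\<bar> \<le> \<eta> \<Longrightarrow> norm (\<phi> \<theta> - exp (-(c * \<bar>\<theta>\<bar> powr \<beta>))) \<le> B * \<bar>\<theta>\<bar> powr (\<beta> + e)"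
  shows "norm ((\<integral>\<theta>. indicator {-pi..pi} \<theta> *\<^sub>R \<phi> \<theta> ^ n \<partial>lborel)
                - complex_of_real (\<integral>\<theta>. exp (-(real n * c * \<bar>\<theta>\<bar> powr \<beta>)) \<partial>lborel))
         \<le> 2 * r * (real n * B * r powr (\<beta> + e))
           + 2 * exp (-(real n * \<kappa> / 2 * r powr \<beta>)) * (2 * Gamma (1/\<beta>) / (\<beta> * (real n * \<kappa> / 2) powr (1/\<beta>)))"
proof -
  define f where "f = (\<lambda>\<theta>. indicator {-pi..pi} \<theta> *\<^sub>R \<phi> \<theta> ^ n)"
  define g where "g = (\<lambda>\<theta>. complex_of_real (exp (-(real n * c * \<bar>\<theta>\<bar> powr \<beta>))))"
  define A where "A = real n * B * r powr (\<beta> + e)"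
  define E where "E = exp (-(real n * \<kappa> / 2 * r powr \<beta>))"
  define h where "h = (\<lambda>\<theta>. indicator {-r..r} \<theta> * A + 2 * E * exp (-(real n * \<kappa> / 2 * \<bar>\<theta>\<bar> powr \<beta>)))"
  have "real n * c > 0" "real n * \<kappa> / 2 > 0" using assms by auto
  note stretched = stretched_exp_lborel[OF this(1) assms(1)] stretched_exp_lborel[OF this(2) assms(1)]
  have norm_\<phi>: "norm (\<phi> \<theta>) \<le> 1" if "\<bar>\<theta>\<bar> \<le> pi" for \<theta>
    using global[OF that] assms(4) by (smt (verit) mult_nonneg_nonneg powr_ge_zero)
  have f_int: "integrable lborel f"
    unfolding f_def by (rule integrable_indicator_power[OF _ norm_\<phi>]) simp_all
  have g_int: "integrable lborel g" unfolding g_def using stretched(1) by simp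
  have "integrable lborel (indicator {-r..r} :: real \<Rightarrow> real)"
    using assms(9) by (intro integrable_real_indicator) auto
  hence h_int: "integrable lborel h"
    unfolding h_def using stretched(3) by (intro Bochner_Integration.integrable_add) auto
  have h_integral: "(\<integral>\<theta>. h \<theta> \<partial>lborel) = 2 * r * A + 2 * E * (2 * Gamma (1/\<beta>) / (\<beta> * (real n * \<kappa> / 2) powr (1/\<beta>)))"
    unfolding h_def using stretched(3,4) assms(9) by (subst Bochner_Integration.integral_add) auto
  have pointwise: "norm (f \<theta> - g \<theta>) \<le> h \<theta>" for \<theta>
  proof (cases "\<bar>\<theta>\<bar> \<le> r")
    case True
    hence "\<bar>\<theta>\<bar> \<le> \<eta>" "\<bar>\<theta>\<bar> \<le> pi" using assms(6,10) pi_gt3 by linarith+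
    hence "norm (f \<theta> - g \<theta>) \<le> real n * (B * \<bar>\<theta>\<bar> powr (\<beta> + e))"
      unfolding f_def g_def using assms(2) norm_\<phi> local
      by (auto simp: abs_le_iff mult.assoc intro!: norm_power_sub_exp_le)
    also have "\<dots> \<le> A"
      unfolding A_def using True assms by (simp add: mult.assoc mult_left_mono powr_mono2)
    finally have "norm (f \<theta> - g \<theta>) \<le> A" .
    moreover have "0 \<le> 2 * E * exp (-(real n * \<kappa> / 2 * \<bar>\<theta>\<bar> powr \<beta>))" by (simp add: E_def)
    ultimately show ?thesis using True by (simp add: h_def abs_le_iff)
  next
    case False
    hence "norm (f \<theta> - g \<theta>) \<le> 2 * E * exp (-(real n * \<kappa> / 2 * \<bar>\<theta>\<bar> powr \<beta>))"
      unfolding f_def g_def E_def using assms global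
      by (intro norm_power_sub_stretched_exp_tail) auto
    moreover have "0 \<le> indicator {-r..r} \<theta> * A" using assms(7) by (simp add: A_def)
    ultimately show ?thesis by (simp add: h_def)
  qed
  have "norm ((\<integral>\<theta>. f \<theta> \<partial>lborel) - (\<integral>\<theta>. g \<theta> \<partial>lborel)) = norm (\<integral>\<theta>. f \<theta> - g \<theta> \<partial>lborel)"
    using f_int g_int by simp
  also have "\<dots> \<le> (\<integral>\<theta>. norm (f \<theta> - g \<theta>) \<partial>lborel)" by (rule integral_norm_bound)
  also have "\<dots> \<le> (\<integral>\<theta>. h \<theta> \<partial>lborel)"
    using f_int g_int h_int pointwise by (intro integral_mono) auto
  finally show ?thesis unfolding h_integral f_def g_def A_def E_def by simp
qed

lemma cutoff_powr_identities:
  fixes N \<beta> e :: real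
  assumes "N > 0" "\<beta> > 0" "e > 0"
  defines "\<gamma> \<equiv> e / (2 * \<beta> * (\<beta> + e + 1))"
  shows "2 * N powr (\<gamma> - 1/\<beta>) * (N * B * (N powr (\<gamma> - 1/\<beta>)) powr (\<beta> + e))
           = 2 * B * N powr (-(1/\<beta>) - e/(2*\<beta>))"
    and "N * (N powr (\<gamma> - 1/\<beta>)) powr \<beta> = N powr (\<beta> * \<gamma>)"
proof -
  define q where "q = \<gamma> - 1/\<beta>"
  have N_times: "N * N powr x = N powr (1 + x)" for x using assms(1) by (simp add: powr_add)
  have "\<gamma> * (\<beta> + e + 1) = e / (2*\<beta>)" using assms by (simp add: \<gamma>_def)
  moreover have "(\<beta> + e + 1) / \<beta> = 1 + e/\<beta> + 1/\<beta>" using assms(2) by (simp add: add_divide_distrib)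
  ultimately have exponent: "1 + (q + q * (\<beta> + e)) = -(1/\<beta>) - e/(2*\<beta>)"
    using assms(2) by (simp add: q_def algebra_simps add_divide_distrib)
  have "2 * N powr q * (N * B * (N powr q) powr (\<beta> + e)) = 2 * B * (N * (N powr q * N powr (q * (\<beta> + e))))"
    by (simp add: powr_powr mult_ac)
  also have "N powr q * N powr (q * (\<beta> + e)) = N powr (q + q * (\<beta> + e))"
    by (rule powr_add[symmetric])
  finally show "2 * N powr (\<gamma> - 1/\<beta>) * (N * B * (N powr (\<gamma> - 1/\<beta>)) powr (\<beta> + e))
      = 2 * B * N powr (-(1/\<beta>) - e/(2*\<beta>))"
    unfolding N_times exponent unfolding q_def .
  have "N * (N powr q) powr \<beta> = N powr (1 + q * \<beta>)"
    by (simp add: powr_powr N_times)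
  also have "1 + q * \<beta> = \<beta> * \<gamma>" using assms(2) by (simp add: q_def field_simps)
  finally show "N * (N powr (\<gamma> - 1/\<beta>)) powr \<beta> = N powr (\<beta> * \<gamma>)"
    unfolding q_def .
qed

lemma integral_power_sub_stretched_exp_asymp:
  fixes \<phi> :: "real \<Rightarrow> complex" and \<beta> c e \<kappa> \<eta> B :: real
  assumes "\<beta> > 0" "c > 0" "e > 0" "\<kappa> > 0" "\<kappa> \<le> c" "\<eta> > 0" "\<eta> \<le> 1" "B \<ge> 0"
    and "\<phi> \<in> borel_measurable borel"
    and "\<And>\<theta>. \<bar>\<theta>\<bar> \<le> pi \<Longrightarrow> norm (\<phi> \<theta>) \<le> 1 - \<kappa> * \<bar>\<theta>\<bar> powr \<beta>"
    and "\<And>\<theta>. \<bar>\<theta>\<bar> \<le> \<eta> \<Longrightarrow> norm (\<phi> \<theta> - exp (-(c * \<bar>\<theta>\<bar> powr \<beta>))) \<le> B * \<bar>\<theta>\<bar> powr (\<beta> + e)"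
  shows "\<exists>C. eventually (\<lambda>n. norm ((\<integral>\<theta>. indicator {-pi..pi} \<theta> *\<^sub>R \<phi> \<theta> ^ n \<partial>lborel)
                - complex_of_real (\<integral>\<theta>. exp (-(real n * c * \<bar>\<theta>\<bar> powr \<beta>)) \<partial>lborel))
         \<le> C * real n powr (-(1/\<beta>) - e/(2*\<beta>))) sequentially"
proof -
  define \<gamma> where "\<gamma> = e / (2 * \<beta> * (\<beta> + e + 1))"
  define G where "G = 2 * Gamma (1/\<beta>) / (\<beta> * (\<kappa>/2) powr (1/\<beta>))"
  have "\<gamma> > 0" using assms by (simp add: \<gamma>_def)
  have "e / (2 * (\<beta> + e + 1)) * (1/\<beta>) < 1 * (1/\<beta>)"
    using assms by (intro mult_strict_right_mono) (auto simp: field_simps)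
  moreover have "\<gamma> = e / (2 * (\<beta> + e + 1)) * (1/\<beta>)" by (simp add: \<gamma>_def)
  ultimately have "\<gamma> - 1/\<beta> < 0" by simp
  have "\<kappa>/2 > 0" "\<beta> * \<gamma> > 0" using assms \<open>\<gamma> > 0\<close> by simp_all
  have "G \<ge> 0" using assms by (simp add: G_def Gamma_real_pos less_imp_le)
  have "eventually (\<lambda>n. norm ((\<integral>\<theta>. indicator {-pi..pi} \<theta> *\<^sub>R \<phi> \<theta> ^ n \<partial>lborel)
                - complex_of_real (\<integral>\<theta>. exp (-(real n * c * \<bar>\<theta>\<bar> powr \<beta>)) \<partial>lborel))
         \<le> (2 * B + 2 * G) * real n powr (-(1/\<beta>) - e/(2*\<beta>))) sequentially"
    using eventually_powr_le[OF \<open>\<gamma> - 1/\<beta> < 0\<close> assms(6)]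
      eventually_exp_neg_powr_le_powr[OF \<open>\<kappa>/2 > 0\<close> \<open>\<beta> * \<gamma> > 0\<close>, of "e/(2*\<beta>)"]
      eventually_ge_at_top[of "1::nat"]
  proof eventually_elim
    case (elim n)
    define N where "N = real n"
    define r where "r = N powr (\<gamma> - 1/\<beta>)"
    have "N > 0" "r > 0" "r \<le> \<eta>" using elim by (simp_all add: N_def r_def)
    note bound = integral_power_sub_stretched_exp_le[OF assms(1-5,7-8) elim(3) \<open>r > 0\<close> \<open>r \<le> \<eta>\<close> assms(9-11)]
    have window: "2 * r * (real n * B * r powr (\<beta> + e)) = 2 * B * N powr (-(1/\<beta>) - e/(2*\<beta>))"
      using cutoff_powr_identities(1)[OF \<open>N > 0\<close> assms(1,3)] by (simp add: r_def N_def \<gamma>_def)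
    have "real n * \<kappa> / 2 * r powr \<beta> = \<kappa>/2 * N powr (\<beta> * \<gamma>)"
      using cutoff_powr_identities(2)[OF \<open>N > 0\<close> assms(1,3)] by (simp add: r_def N_def \<gamma>_def)
    moreover have "(real n * \<kappa> / 2) powr (1/\<beta>) = N powr (1/\<beta>) * (\<kappa>/2) powr (1/\<beta>)"
      using \<open>N > 0\<close> assms by (simp add: N_def powr_mult[symmetric] mult.assoc)
    ultimately have "2 * exp (-(real n * \<kappa> / 2 * r powr \<beta>)) * (2 * Gamma (1/\<beta>) / (\<beta> * (real n * \<kappa> / 2) powr (1/\<beta>)))
        = 2 * G * exp (-(\<kappa>/2 * N powr (\<beta> * \<gamma>))) * N powr (-(1/\<beta>))"
      using \<open>N > 0\<close> assms by (simp add: G_def powr_minus field_simps)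
    also have "\<dots> \<le> 2 * G * N powr (-(e/(2*\<beta>))) * N powr (-(1/\<beta>))"
      using elim(2) \<open>G \<ge> 0\<close> by (intro mult_right_mono mult_left_mono) (auto simp: N_def)
    also have "\<dots> = 2 * G * N powr (-(1/\<beta>) - e/(2*\<beta>))"
      using \<open>N > 0\<close> by (simp add: powr_add[symmetric] algebra_simps)
    finally show ?case using bound unfolding window by (simp add: N_def algebra_simps)
  qed
  thus ?thesis by blast
qed

lemma rescaled_error_bound:
  fixes N \<beta> c p C d G :: real
  assumes "N > 0" "\<beta> > 0" "c > 0"
    and "\<bar>2*pi*p - 2 * G / (\<beta> * (N * c) powr (1/\<beta>))\<bar> \<le> C * N powr (-(1/\<beta>) - d)"
  shows "\<bar>N powr (1/\<beta>) * p - G / (\<beta> * c powr (1/\<beta>) * pi)\<bar> \<le> C / (2*pi) * N powr (-d)"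
proof -
  define u where "u = N powr (1/\<beta>)"
  have "u > 0" "c powr (1/\<beta>) > 0" using assms by (simp_all add: u_def)
  have "N powr (1/\<beta>) * p - G / (\<beta> * c powr (1/\<beta>) * pi)
      = u / (2*pi) * (2*pi*p - 2 * G / (\<beta> * (N * c) powr (1/\<beta>)))"
    using \<open>u > 0\<close> \<open>c powr (1/\<beta>) > 0\<close> assms by (simp add: u_def powr_mult field_simps)
  hence "\<bar>N powr (1/\<beta>) * p - G / (\<beta> * c powr (1/\<beta>) * pi)\<bar>
      = u / (2*pi) * \<bar>2*pi*p - 2 * G / (\<beta> * (N * c) powr (1/\<beta>))\<bar>"
    using \<open>u > 0\<close> by (simp add: abs_mult)
  also have "\<dots> \<le> u / (2*pi) * (C * N powr (-(1/\<beta>) - d))"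
    using assms(4) \<open>u > 0\<close> by (intro mult_left_mono) auto
  also have "\<dots> = C / (2*pi) * N powr (-d)"
    using assms(1) by (simp add: u_def powr_diff powr_minus field_simps)
  finally show ?thesis .
qed

lemma (in aperiodic_int_walk) local_limit_rate:
  fixes \<beta> c e \<eta>\<^sub>0 B :: real
  assumes "\<beta> > 0" "c > 0" "e > 0" "e \<le> \<beta>" "\<eta>\<^sub>0 > 0" "B \<ge> 0"
    and "\<And>\<theta>. \<bar>\<theta>\<bar> < \<eta>\<^sub>0 \<Longrightarrow>
           norm (phi \<theta> - (1 - complex_of_real (c * \<bar>\<theta>\<bar> powr \<beta>))) \<le> B * \<bar>\<theta>\<bar> powr (\<beta> + e)"
  shows "\<exists>C. eventually (\<lambda>n. \<bar>real n powr (1/\<beta>) * prob {\<omega>\<in>space M. S n \<omega> = 0}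
           - Gamma (1/\<beta>) / (\<beta> * c powr (1/\<beta>) * pi)\<bar> \<le> C * real n powr (-(e/(2*\<beta>)))) sequentially"
proof -
  obtain \<kappa> where \<kappa>: "\<kappa> > 0" "\<kappa> \<le> c" "\<And>\<theta>. \<bar>\<theta>\<bar> \<le> pi \<Longrightarrow> norm (phi \<theta>) \<le> 1 - \<kappa> * \<bar>\<theta>\<bar> powr \<beta>"
    using norm_phi_le_1_minus_powr[OF assms(1-3,5-7)] by blast
  obtain \<eta> B' where \<eta>: "0 < \<eta>" "\<eta> \<le> 1" "0 \<le> B'"
    "\<And>\<theta>. \<bar>\<theta>\<bar> \<le> \<eta> \<Longrightarrow> norm (phi \<theta> - exp (-(c * \<bar>\<theta>\<bar> powr \<beta>))) \<le> B' * \<bar>\<theta>\<bar> powr (\<beta> + e)"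
    using phi_near_stretched_exp[OF assms(2,4,5,7)] by blast
  obtain C where C: "eventually (\<lambda>n. norm ((\<integral>\<theta>. indicator {-pi..pi} \<theta> *\<^sub>R phi \<theta> ^ n \<partial>lborel)
                - complex_of_real (\<integral>\<theta>. exp (-(real n * c * \<bar>\<theta>\<bar> powr \<beta>)) \<partial>lborel))
         \<le> C * real n powr (-(1/\<beta>) - e/(2*\<beta>))) sequentially"
    using integral_power_sub_stretched_exp_asymp[OF assms(1-3) \<kappa>(1,2) \<eta>(1-3) borel_measurable_phi \<kappa>(3) \<eta>(4)]
    by blast
  have "eventually (\<lambda>n. \<bar>real n powr (1/\<beta>) * prob {\<omega>\<in>space M. S n \<omega> = 0}
           - Gamma (1/\<beta>) / (\<beta> * c powr (1/\<beta>) * pi)\<bar> \<le> C / (2*pi) * real n powr (-(e/(2*\<beta>)))) sequentially"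
    using C eventually_ge_at_top[of "1::nat"]
  proof eventually_elim
    case (elim n)
    have "real n * c > 0" using elim(2) assms(2) by simp
    from elim(1) have "\<bar>2*pi * prob {\<omega>\<in>space M. S n \<omega> = 0} - 2 * Gamma (1/\<beta>) / (\<beta> * (real n * c) powr (1/\<beta>))\<bar>
        \<le> C * real n powr (-(1/\<beta>) - e/(2*\<beta>))"
      unfolding prob_S_eq_0_Fourier[symmetric] stretched_exp_lborel(2)[OF \<open>real n * c > 0\<close> assms(1)]
        of_real_diff[symmetric] norm_of_real .
    thus ?case using elim(2) assms by (intro rescaled_error_bound) auto
  qed
  thus ?thesis by blast
qed

theorem corollary5:
  fixes M :: "'a measure" and X :: "nat \<Rightarrow> 'a \<Rightarrow> int"
    and \<beta> c_star \<epsilon> :: real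
  assumes "prob_space M"
    and "\<And>i. X i \<in> measurable M (count_space UNIV)"
    and "prob_space.indep_vars M (\<lambda>_. count_space UNIV) X UNIV"
    and "\<And>i. distr M (count_space UNIV) (X i) = distr M (count_space UNIV) (X 0)"
    and A1: "\<And>y::int. int_subgroup_gen {y + k | k. measure M {\<omega>\<in>space M. X 0 \<omega> = k} > 0} = UNIV"
    and A3: "0 < \<beta>" "\<beta> \<le> 2" "0 < c_star" "0 < \<epsilon>"
      "(\<lambda>\<theta>. charfn M (X 0) \<theta> - (1 - complex_of_real (c_star * \<bar>\<theta>\<bar> powr \<beta>)))
         \<in> O[at 0](\<lambda>\<theta>. complex_of_real (\<bar>\<theta>\<bar> powr (\<beta> + \<epsilon>)))"
  shows "\<exists>C3 > 0. \<exists>N3::nat. \<forall>n\<ge>N3.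
     \<bar>real n powr (1 / \<beta>) * measure M {\<omega>\<in>space M. (\<Sum>j<n. X j \<omega>) = 0}
       - Gamma (1 / \<beta>) / (\<beta> * c_star powr (1 / \<beta>) * pi)\<bar>
     \<le> C3 * real n powr (- min (\<epsilon> / (2 * \<beta>)) (1 / 2))"
proof -
  interpret iid_int_walk M X
    using assms(1-4) by (simp add: iid_int_walk_def iid_int_walk_axioms_def)
  interpret aperiodic_int_walk M X
    by unfold_locales (use A1 in \<open>simp add: pX_def\<close>)
  \<comment> \<open>Capping the exponent at \<open>\<beta>\<close> lets the quadratic term of \<open>exp\<close> be absorbed into the error.\<close>
  define e where "e = min \<epsilon> \<beta>"
  have e: "0 < e" "e \<le> \<epsilon>" "e \<le> \<beta>" and rate: "min (\<epsilon> / (2 * \<beta>)) (1 / 2) = e / (2 * \<beta>)"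
    using A3(1,4) by (auto simp: e_def min_def field_simps)
  obtain \<eta>\<^sub>0 B where "\<eta>\<^sub>0 > 0" "B \<ge> 0" "\<And>\<theta>. \<bar>\<theta>\<bar> < \<eta>\<^sub>0 \<Longrightarrow>
      norm (phi \<theta> - (1 - complex_of_real (c_star * \<bar>\<theta>\<bar> powr \<beta>))) \<le> B * \<bar>\<theta>\<bar> powr (\<beta> + e)"
    using phi_expansion_near_0[OF A3(1) e(1,2) A3(5)[unfolded charfn_eq_phi]] by blast
  then obtain C where "eventually (\<lambda>n. \<bar>real n powr (1/\<beta>) * prob {\<omega>\<in>space M. S n \<omega> = 0}
      - Gamma (1/\<beta>) / (\<beta> * c_star powr (1/\<beta>) * pi)\<bar> \<le> C * real n powr (-(e/(2*\<beta>)))) sequentially"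
    using local_limit_rate[OF A3(1,3) e(1,3)] by blast
  then obtain N3 where N3: "\<And>n. n \<ge> N3 \<Longrightarrow> \<bar>real n powr (1/\<beta>) * prob {\<omega>\<in>space M. S n \<omega> = 0}
      - Gamma (1/\<beta>) / (\<beta> * c_star powr (1/\<beta>) * pi)\<bar> \<le> C * real n powr (-(e/(2*\<beta>)))"
    unfolding eventually_sequentially by blast
  show ?thesis
  proof (intro exI[of _ "max C 1"] conjI exI[of _ N3] allI impI)
    fix n assume "n \<ge> N3"
    moreover have "C * real n powr (-(e/(2*\<beta>))) \<le> max C 1 * real n powr (-(e/(2*\<beta>)))"
      by (intro mult_right_mono) auto
    ultimately show "\<bar>real n powr (1 / \<beta>) * measure M {\<omega>\<in>space M. (\<Sum>j<n. X j \<omega>) = 0}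
       - Gamma (1 / \<beta>) / (\<beta> * c_star powr (1 / \<beta>) * pi)\<bar>
     \<le> max C 1 * real n powr (- min (\<epsilon> / (2 * \<beta>)) (1 / 2))"
      using N3 unfolding rate S_def by fastforce
  qed simp
qed

end
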